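(* Let $n>1$ and $m$ be positive integers, and let $\mathbf{u}\in\mathbb{R}^n$ be a fixed vector. Let $\mathbf{R}\in\mathbb{R}^{m\times n}$ be a random matrix such that either (i) its rows $\mathbf{R}_i$ are i.i.d. samples from an isotropic distribution $P$ on $\mathbb{R}^n$, or (ii) $\hat{\mathbf{R}}$ is a randomly generated matrix with orthogonal rows (uniformly over all rotations). Let $\mathbf{v}=\mathrm{ReLU}\left(\sqrt{2n/m}\cdot\hat{\mathbf{R}}\mathbf{u}\right)$. Then $\mathbb{E}[\lVert\mathbf{v}\rVert^2]=K_n\cdot\lVert\mathbf{u}\rVert^2$, where \[ K_n=\begin{cases}\frac{2S_{n-1}}{S_n}\cdot\left(\frac{2}{3}\cdot\frac{4}{5}\cdots\frac{n-2}{n-1}\right) & \text{if } n \text{ is even},\\[4pt] \frac{2S_{n-1}}{S_n}\cdot\left(\frac{1}{2}\cdot\frac{3}{4}\cdots\frac{n-2}{n-1}\right)\cdot\frac{\pi}{2} & \text{otherwise},\end{cases} \] and $S_n$ denotes the surface area of a unit $n$-dimensional sphere (empty products are equal to $1$).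
   Context: For a matrix $\mathbf{R}$ with nonzero rows $\mathbf{R}_i$, $\hat{\mathbf{R}}$ denotes the matrix whose $i$-th row is $\hat{\mathbf{R}}_i=\mathbf{R}_i/\lVert\mathbf{R}_i\rVert_2$ (each row normalized to unit Euclidean norm). A distribution $P$ on $\mathbb{R}^n$ is isotropic if it is invariant under all orthogonal transformations of $\mathbb{R}^n$ (all directions equally likely), with no mass at the origin. In case (ii), "randomly generated with orthogonal rows" means $\hat{\mathbf{R}}$ has orthonormal rows (so $m\le n$) and its distribution is uniform over all rotations (Haar-distributed). $\mathrm{ReLU}$ is applied coordinatewise, $\mathrm{ReLU}(x)=\max(0,x)$. *)

theory Defs
  imports "HOL-Probability.Probability"
begin

definition rownormalize :: "real^'n^'m \<Rightarrow> real^'n^'m" where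
  "rownormalize R = (\<chi> i. (1 / norm (R $ i)) *\<^sub>R (R $ i))"

definition relu_vec :: "real^'m \<Rightarrow> real^'m" where
  "relu_vec x = (\<chi> i. max 0 (x $ i))"

definition isotropic :: "(real^'n) measure \<Rightarrow> bool" where
  "isotropic P \<longleftrightarrow> prob_space P \<and> sets P = sets borel \<and>
     (\<forall>f. orthogonal_transformation f \<longrightarrow> distr P borel f = P) \<and>
     emeasure P {0} = 0"

definition orthonormal_rows :: "real^'n^'m \<Rightarrow> bool" where
  "orthonormal_rows A \<longleftrightarrow> (\<forall>i j. (A $ i) \<bullet> (A $ j) = (if i = j then 1 else 0))"

text \<open>Surface area of the unit n-dimensional sphere S^n (in R^(n+1)).\<close>
definition sphere_area :: "nat \<Rightarrow> real" where
  "sphere_area n = 2 * pi powr ((real n + 1) / 2) / Gamma ((real n + 1) / 2)"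

definition K_const :: "nat \<Rightarrow> real" where
  "K_const n =
     (if even n then
        2 * sphere_area (n - 1) / sphere_area n *
          (\<Prod>k\<in>{1..(n - 2) div 2}. real (2 * k) / real (2 * k + 1))
      else
        2 * sphere_area (n - 1) / sphere_area n *
          (\<Prod>k\<in>{1..(n - 1) div 2}. real (2 * k - 1) / real (2 * k)) * (pi / 2))"

end

theory Submission
  imports Defs
begin

(* Each row of the row-normalised matrix is almost surely a unit vector X whose law is invariant
   under every orthogonal map: in case (i) because P is isotropic and x/|x| commutes with
   orthogonal maps, in case (ii) because right multiplication by an orthogonal matrix acts on each
   row. Invariance under x \<mapsto> -x shows E[ReLU(X \<bullet> u)^2] = E[(X \<bullet> u)^2] / 2, and invariance
   under maps sending u to a multiple of a coordinate axis shows E[(X \<bullet> u)^2] = |u|^2 / n, since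
   the squared coordinates of X sum to 1. Summing over the m rows, the factor 2n/m cancels, so
   E|v|^2 = |u|^2. Finally K_n = 1: with S_n = 2 \<pi>^((n+1)/2) / \<Gamma>((n+1)/2), both the ratio
   S_(n-1) / S_n and the products in K_n are quotients of \<Gamma>-values that cancel. *)

lemma Gamma_real_plus1: "(0::real) < x \<Longrightarrow> Gamma (x + 1) = x * Gamma x"
  by (rule Gamma_plus1) (use nonpos_Ints_nonpos in fastforce)

lemma Gamma_real_nonzero: "(0::real) < x \<Longrightarrow> Gamma x \<noteq> 0"
  by (metis Gamma_real_pos less_irrefl)

lemma prod_even_div_odd_eq_Gamma:
  "(\<Prod>j=1..k. real (2 * j) / real (2 * j + 1)) = sqrt pi * Gamma (real k + 1) / (2 * Gamma (real k + 3 / 2))"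
proof (induction k)
  case 0
  show ?case
    using Gamma_real_plus1[of "1 / 2"] Gamma_real_nonzero[of "3 / 2"] by (simp add: Gamma_one_half_real)
next
  case (Suc k)
  have Gamma_k1: "Gamma (real (Suc k) + 1) = (real k + 1) * Gamma (real k + 1)"
    using Gamma_real_plus1[of "real k + 1"] by (simp add: add_ac)
  have Gamma_k32: "Gamma (real (Suc k) + 3 / 2) = (real k + 3 / 2) * Gamma (real k + 3 / 2)"
    using Gamma_real_plus1[of "real k + 3 / 2"] by (simp add: add_ac)
  have "(\<Prod>j=1..Suc k. real (2 * j) / real (2 * j + 1)) =
      (\<Prod>j=1..k. real (2 * j) / real (2 * j + 1)) * (real (2 * k + 2) / real (2 * k + 3))"
    by (simp add: prod.nat_ivl_Suc')
  also have "\<dots> = sqrt pi * Gamma (real (Suc k) + 1) / (2 * Gamma (real (Suc k) + 3 / 2))"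
    unfolding Suc.IH Gamma_k1 Gamma_k32 using Gamma_real_nonzero[of "real k + 3 / 2"] by (simp add: field_simps)
  finally show ?case .
qed

lemma prod_odd_div_even_eq_Gamma:
  "(\<Prod>j=1..k. real (2 * j - 1) / real (2 * j)) = Gamma (real k + 1 / 2) / (sqrt pi * Gamma (real k + 1))"
proof (induction k)
  case 0
  show ?case by (simp add: Gamma_one_half_real)
next
  case (Suc k)
  have Gamma_k1: "Gamma (real (Suc k) + 1) = (real k + 1) * Gamma (real k + 1)"
    using Gamma_real_plus1[of "real k + 1"] by (simp add: add_ac)
  have Gamma_k12: "Gamma (real (Suc k) + 1 / 2) = (real k + 1 / 2) * Gamma (real k + 1 / 2)"
    using Gamma_real_plus1[of "real k + 1 / 2"] by (simp add: add_ac)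
  have "(\<Prod>j=1..Suc k. real (2 * j - 1) / real (2 * j)) =
      (\<Prod>j=1..k. real (2 * j - 1) / real (2 * j)) * (real (2 * k + 1) / real (2 * k + 2))"
    by (simp add: prod.nat_ivl_Suc')
  also have "\<dots> = Gamma (real (Suc k) + 1 / 2) / (sqrt pi * Gamma (real (Suc k) + 1))"
    unfolding Suc.IH Gamma_k1 Gamma_k12 using Gamma_real_nonzero[of "real k + 1"] by (simp add: field_simps)
  finally show ?case .
qed

lemma sphere_area_ratio:
  "sphere_area n / sphere_area (Suc n) = Gamma ((real n + 2) / 2) / (sqrt pi * Gamma ((real n + 1) / 2))"
proof -
  have "(real (Suc n) + 1) / 2 = (real n + 1) / 2 + 1 / 2" by simp
  then have "pi powr ((real (Suc n) + 1) / 2) = pi powr ((real n + 1) / 2) * sqrt pi"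
    by (simp only: powr_add powr_half_sqrt pi_ge_zero)
  moreover have "(real (Suc n) + 1) / 2 = (real n + 2) / 2" by simp
  moreover have "Gamma ((real n + 1) / 2) > 0" "Gamma ((real n + 2) / 2) > 0" by simp_all
  ultimately show ?thesis
    unfolding sphere_area_def by (simp add: field_simps)
qed

lemma K_const_eq_1:
  assumes "n > 0"
  shows "K_const n = 1"
proof (cases "even n")
  case True
  have "\<exists>k. n = Suc (2 * k + 1)" using True assms by presburger
  then obtain k where n: "n = Suc (2 * k + 1)" ..
  have arg: "(real (2 * k + 1) + 2) / 2 = real k + 3 / 2" "(real (2 * k + 1) + 1) / 2 = real k + 1"
    by simp_all
  have "K_const n = 2 * (sphere_area (2 * k + 1) / sphere_area (Suc (2 * k + 1))) *
      (\<Prod>j=1..k. real (2 * j) / real (2 * j + 1))"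
    using True unfolding K_const_def n by simp
  also have "\<dots> = 2 * (Gamma (real k + 3 / 2) / (sqrt pi * Gamma (real k + 1))) *
      (sqrt pi * Gamma (real k + 1) / (2 * Gamma (real k + 3 / 2)))"
    unfolding sphere_area_ratio prod_even_div_odd_eq_Gamma arg ..
  also have "\<dots> = 1"
    using Gamma_real_nonzero[of "real k + 3 / 2"] Gamma_real_nonzero[of "real k + 1"] by simp
  finally show ?thesis .
next
  case False
  have "\<exists>k. n = Suc (2 * k)" using False by presburger
  then obtain k where n: "n = Suc (2 * k)" ..
  have arg: "(real (2 * k) + 2) / 2 = real k + 1" "(real (2 * k) + 1) / 2 = real k + 1 / 2"
    by simp_all
  have "K_const n = 2 * (sphere_area (2 * k) / sphere_area (Suc (2 * k))) *
      (\<Prod>j=1..k. real (2 * j - 1) / real (2 * j)) * (pi / 2)"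
    using False unfolding K_const_def n by simp
  also have "\<dots> = 2 * (Gamma (real k + 1) / (sqrt pi * Gamma (real k + 1 / 2))) *
      (Gamma (real k + 1 / 2) / (sqrt pi * Gamma (real k + 1))) * (pi / 2)"
    unfolding sphere_area_ratio prod_odd_div_even_eq_Gamma arg ..
  also have "\<dots> = 1"
    using Gamma_real_nonzero[of "real k + 1 / 2"] Gamma_real_nonzero[of "real k + 1"] by simp
  finally show ?thesis .
qed

lemma borel_measurable_vec_nth: "(\<lambda>x::'a::euclidean_space^'n. x $ i) \<in> borel_measurable borel"
  by (intro borel_measurable_continuous_onI linear_continuous_on bounded_linear_vec_nth)

lemma borel_measurable_vecI:
  fixes f :: "'a \<Rightarrow> 'b::euclidean_space^'n"
  assumes "\<And>i. (\<lambda>x. f x $ i) \<in> borel_measurable M"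
  shows "f \<in> borel_measurable M"
proof -
  have "(\<lambda>x. f x \<bullet> b) \<in> borel_measurable M" if "b \<in> Basis" for b
  proof -
    obtain i c where "b = axis i c" "c \<in> Basis" using \<open>b \<in> Basis\<close> unfolding Basis_vec_def by auto
    then show ?thesis
      by (simp add: inner_axis) (intro borel_measurable_inner assms, simp)
  qed
  then show ?thesis by (subst borel_measurable_euclidean_space) blast
qed

lemma rownormalize_nth: "rownormalize A $ i = sgn (A $ i)"
  by (simp add: rownormalize_def sgn_div_norm divide_inverse)

lemma borel_measurable_rownormalize: "rownormalize \<in> borel_measurable borel"
  by (rule borel_measurable_vecI)
     (simp add: rownormalize_nth measurable_compose[OF borel_measurable_vec_nth borel_measurable_sgn])

lemma matrix_mult_transpose_matrix_nth:
  fixes A :: "real^'n^'m" and f :: "real^'n \<Rightarrow> real^'n"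
  assumes "linear f"
  shows "(A ** transpose (matrix f)) $ i = f (A $ i)"
proof -
  have "(A ** transpose (matrix f)) $ i = matrix f *v (A $ i)"
    by (simp add: vec_eq_iff matrix_matrix_mult_def matrix_vector_mult_def transpose_def mult.commute)
  also have "\<dots> = f (A $ i)"
    using matrix_vector_mul(2)[OF assms] by metis
  finally show ?thesis .
qed

lemma relu_vec_scaleR: "c \<ge> 0 \<Longrightarrow> relu_vec (c *\<^sub>R x) = c *\<^sub>R relu_vec x"
  by (simp add: relu_vec_def vec_eq_iff max_mult_distrib_left)

lemma norm_relu_vec_square: "(norm (relu_vec x))\<^sup>2 = (\<Sum>i\<in>UNIV. (max 0 (x $ i))\<^sup>2)"
  unfolding power2_norm_eq_inner inner_vec_def by (simp add: relu_vec_def power2_eq_square)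

definition orthogonally_invariant :: "'a measure \<Rightarrow> ('a \<Rightarrow> real^'n) \<Rightarrow> bool" where
  "orthogonally_invariant M X \<longleftrightarrow>
     (\<forall>f. orthogonal_transformation f \<longrightarrow> distr M borel (\<lambda>\<omega>. f (X \<omega>)) = distr M borel X)"

lemma borel_measurable_orthogonal_transformation:
  fixes f :: "real^'n \<Rightarrow> real^'n"
  shows "orthogonal_transformation f \<Longrightarrow> f \<in> borel_measurable borel"
  by (intro borel_measurable_continuous_onI linear_continuous_on)
     (simp add: linear_conv_bounded_linear[symmetric] orthogonal_transformation_linear)

lemma integral_orthogonally_invariant:
  fixes \<phi> :: "real^'n \<Rightarrow> real"
  assumes inv: "orthogonally_invariant M X" and X: "X \<in> borel_measurable M"
    and f: "orthogonal_transformation f" and \<phi>: "\<phi> \<in> borel_measurable borel"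
  shows "(\<integral>\<omega>. \<phi> (f (X \<omega>)) \<partial>M) = (\<integral>\<omega>. \<phi> (X \<omega>) \<partial>M)"
proof -
  have fX: "(\<lambda>\<omega>. f (X \<omega>)) \<in> borel_measurable M"
    using measurable_compose[OF X borel_measurable_orthogonal_transformation[OF f]] .
  have "(\<integral>\<omega>. \<phi> (f (X \<omega>)) \<partial>M) = integral\<^sup>L (distr M borel (\<lambda>\<omega>. f (X \<omega>))) \<phi>"
    by (rule integral_distr[OF fX \<phi>, symmetric])
  also have "\<dots> = integral\<^sup>L (distr M borel X) \<phi>"
    using inv f unfolding orthogonally_invariant_def by simp
  also have "\<dots> = (\<integral>\<omega>. \<phi> (X \<omega>) \<partial>M)"
    by (rule integral_distr[OF X \<phi>])
  finally show ?thesis .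
qed

lemma integrable_inner_square_bounded:
  fixes X :: "'a \<Rightarrow> 'b::euclidean_space" and g :: "real \<Rightarrow> real"
  assumes "finite_measure M" and X: "X \<in> borel_measurable M" and "AE \<omega> in M. norm (X \<omega>) \<le> 1"
    and g: "g \<in> borel_measurable borel" and g_le: "\<And>t. \<bar>g t\<bar> \<le> t\<^sup>2"
  shows "integrable M (\<lambda>\<omega>. g (X \<omega> \<bullet> v))"
proof (rule finite_measure.integrable_const_bound[OF assms(1), where B = "(norm v)\<^sup>2"])
  show "AE \<omega> in M. norm (g (X \<omega> \<bullet> v)) \<le> (norm v)\<^sup>2"
    using assms(3)
  proof eventually_elim
    case (elim \<omega>)
    have "\<bar>X \<omega> \<bullet> v\<bar> \<le> norm (X \<omega>) * norm v" by (rule Cauchy_Schwarz_ineq2)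
    also have "\<dots> \<le> norm v" by (rule mult_left_le_one_le) (use elim in auto)
    finally have "\<bar>X \<omega> \<bullet> v\<bar>\<^sup>2 \<le> (norm v)\<^sup>2" by (rule power_mono) simp
    then show ?case unfolding real_norm_def power2_abs using g_le[of "X \<omega> \<bullet> v"] by linarith
  qed
  show "(\<lambda>\<omega>. g (X \<omega> \<bullet> v)) \<in> borel_measurable M"
    using measurable_compose[OF borel_measurable_inner[OF X borel_measurable_const] g] .
qed

lemma integral_inner_square_orthogonally_invariant:
  fixes X :: "'a \<Rightarrow> real^'n"
  assumes M: "prob_space M" and X: "X \<in> borel_measurable M"
    and unit: "AE \<omega> in M. norm (X \<omega>) = 1" and inv: "orthogonally_invariant M X"
  shows "(\<integral>\<omega>. (X \<omega> \<bullet> v)\<^sup>2 \<partial>M) = (norm v)\<^sup>2 / CARD('n)"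
proof -
  interpret prob_space M by (fact M)
  define h where "h v = (\<integral>\<omega>. (X \<omega> \<bullet> v)\<^sup>2 \<partial>M)" for v
  have h_orthogonal: "h (f v) = h v" if f: "orthogonal_transformation f" for f v
  proof -
    have "h v = (\<integral>\<omega>. (f (X \<omega>) \<bullet> f v)\<^sup>2 \<partial>M)"
      using f by (simp add: h_def orthogonal_transformation_def)
    also have "\<dots> = h (f v)"
      unfolding h_def by (rule integral_orthogonally_invariant[OF inv X f]) simp
    finally show ?thesis ..
  qed
  \<comment> \<open>By invariance h depends only on the norm; summing over the axes gives E |X|^2 = 1.\<close>
  fix k :: 'n
  have h_axis: "h (axis j 1) = h (axis k 1)" for j
  proof -
    obtain f :: "real^'n \<Rightarrow> real^'n" where "orthogonal_transformation f" "f (axis j 1) = axis k 1"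
      using orthogonal_transformation_exists[of "axis j 1" "axis k 1"] by auto
    with h_orthogonal show ?thesis by metis
  qed
  have "(\<Sum>j\<in>UNIV. h (axis j 1)) = (\<integral>\<omega>. (\<Sum>j\<in>UNIV. (X \<omega> \<bullet> axis j 1)\<^sup>2) \<partial>M)"
    unfolding h_def
    by (rule Bochner_Integration.integral_sum[symmetric], rule integrable_inner_square_bounded)
       (use X unit finite_measure_axioms in auto)
  also have "\<dots> = (\<integral>\<omega>. (norm (X \<omega>))\<^sup>2 \<partial>M)"
    unfolding inner_axis unfolding power2_norm_eq_inner inner_vec_def by (simp add: power2_eq_square)
  also have "\<dots> = 1"
    using unit by (subst integral_cong_AE[where g = "\<lambda>_. 1"]) (use X prob_space in auto)
  finally have "(\<Sum>j\<in>UNIV. h (axis j 1)) = 1" .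
  moreover have "(\<Sum>j\<in>UNIV. h (axis j 1)) = (\<Sum>j\<in>(UNIV::'n set). h (axis k 1))"
    by (rule sum.cong[OF refl h_axis])
  ultimately have h_k: "h (axis k 1) = 1 / CARD('n)"
    by (simp add: field_simps)
  obtain f :: "real^'n \<Rightarrow> real^'n" where f: "orthogonal_transformation f" "f v = norm v *\<^sub>R axis k 1"
    using orthogonal_transformation_exists[of v "norm v *\<^sub>R axis k 1"] by auto
  have "h v = h (norm v *\<^sub>R axis k 1)"
    using h_orthogonal[OF f(1), of v] f(2) by simp
  also have "\<dots> = (norm v)\<^sup>2 * h (axis k 1)"
    by (simp add: h_def power_mult_distrib)
  also have "\<dots> = (norm v)\<^sup>2 / CARD('n)"
    by (simp add: h_k)
  finally show ?thesis
    by (simp only: h_def)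
qed

lemma integral_relu_inner_square_orthogonally_invariant:
  fixes X :: "'a \<Rightarrow> real^'n"
  assumes M: "prob_space M" and X: "X \<in> borel_measurable M"
    and unit: "AE \<omega> in M. norm (X \<omega>) = 1" and inv: "orthogonally_invariant M X"
  shows "(\<integral>\<omega>. (max 0 (X \<omega> \<bullet> v))\<^sup>2 \<partial>M) = (norm v)\<^sup>2 / (2 * CARD('n))"
proof -
  interpret prob_space M by (fact M)
  have integrable: "integrable M (\<lambda>\<omega>. (max 0 (X \<omega> \<bullet> v))\<^sup>2)"
    "integrable M (\<lambda>\<omega>. (max 0 (- (X \<omega> \<bullet> v)))\<^sup>2)"
    by (rule integrable_inner_square_bounded; use X unit finite_measure_axioms in \<open>force simp: max_def\<close>)+
  \<comment> \<open>The reflection x \<mapsto> -x exchanges the positive and the negative part of X \<bullet> v.\<close>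
  have "(\<integral>\<omega>. (max 0 (- (X \<omega> \<bullet> v)))\<^sup>2 \<partial>M) = (\<integral>\<omega>. (max 0 (X \<omega> \<bullet> v))\<^sup>2 \<partial>M)"
    using integral_orthogonally_invariant[OF inv X
        orthogonal_transformation_neg[THEN iffD2, OF orthogonal_transformation_id], of "\<lambda>x. (max 0 (x \<bullet> v))\<^sup>2"]
    by simp
  then have "2 * (\<integral>\<omega>. (max 0 (X \<omega> \<bullet> v))\<^sup>2 \<partial>M) =
      (\<integral>\<omega>. (max 0 (X \<omega> \<bullet> v))\<^sup>2 + (max 0 (- (X \<omega> \<bullet> v)))\<^sup>2 \<partial>M)"
    using integrable by simp
  also have "\<dots> = (\<integral>\<omega>. (X \<omega> \<bullet> v)\<^sup>2 \<partial>M)"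
    by (rule Bochner_Integration.integral_cong) (auto simp: max_def)
  also have "\<dots> = (norm v)\<^sup>2 / CARD('n)"
    by (rule integral_inner_square_orthogonally_invariant[OF M X unit inv])
  finally show ?thesis
    by (simp add: field_simps)
qed

lemma orthogonally_invariant_if_isotropic:
  fixes X :: "'a \<Rightarrow> real^'n"
  assumes X: "X \<in> borel_measurable M" and iso: "isotropic (distr M borel X)"
  shows "orthogonally_invariant M X"
  unfolding orthogonally_invariant_def
proof (intro allI impI)
  fix f :: "real^'n \<Rightarrow> real^'n"
  assume f: "orthogonal_transformation f"
  have "distr M borel (\<lambda>\<omega>. f (X \<omega>)) = distr (distr M borel X) borel f"
    using distr_distr[OF borel_measurable_orthogonal_transformation[OF f] X] by (simp add: comp_def)
  also have "\<dots> = distr M borel X"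
    using iso f unfolding isotropic_def by blast
  finally show "distr M borel (\<lambda>\<omega>. f (X \<omega>)) = distr M borel X" .
qed

lemma AE_nonzero_if_isotropic:
  fixes X :: "'a \<Rightarrow> real^'n"
  assumes X: "X \<in> borel_measurable M" and iso: "isotropic (distr M borel X)"
  shows "AE \<omega> in M. X \<omega> \<noteq> 0"
proof -
  have "AE x in distr M borel X. x \<noteq> 0"
    using iso unfolding isotropic_def by (intro AE_I'[of "{0}"]) auto
  then show ?thesis
    by (subst (asm) AE_distr_iff[OF X]) auto
qed

lemma orthogonally_invariant_sgn:
  fixes X :: "'a \<Rightarrow> real^'n"
  assumes X: "X \<in> borel_measurable M" and inv: "orthogonally_invariant M X"
  shows "orthogonally_invariant M (\<lambda>\<omega>. sgn (X \<omega>))"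
  unfolding orthogonally_invariant_def
proof (intro allI impI)
  fix f :: "real^'n \<Rightarrow> real^'n"
  assume f: "orthogonal_transformation f"
  have fX: "(\<lambda>\<omega>. f (X \<omega>)) \<in> borel_measurable M"
    using measurable_compose[OF X borel_measurable_orthogonal_transformation[OF f]] .
  have "distr M borel (\<lambda>\<omega>. f (sgn (X \<omega>))) = distr M borel (\<lambda>\<omega>. sgn (f (X \<omega>)))"
    using f by (simp add: sgn_div_norm orthogonal_transformation_scaleR orthogonal_transformation_norm)
  also have "\<dots> = distr (distr M borel (\<lambda>\<omega>. f (X \<omega>))) borel sgn"
    using distr_distr[OF borel_measurable_sgn fX] by (simp add: comp_def)
  also have "\<dots> = distr (distr M borel X) borel sgn"
    using inv f unfolding orthogonally_invariant_def by simp
  also have "\<dots> = distr M borel (\<lambda>\<omega>. sgn (X \<omega>))"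
    using distr_distr[OF borel_measurable_sgn X] by (simp add: comp_def)
  finally show "distr M borel (\<lambda>\<omega>. f (sgn (X \<omega>))) = distr M borel (\<lambda>\<omega>. sgn (X \<omega>))" .
qed

lemma orthogonally_invariant_row:
  fixes A :: "'a \<Rightarrow> real^'n^'m"
  assumes A: "A \<in> borel_measurable M"
    and inv: "\<And>Q :: real^'n^'n. orthogonal_matrix Q \<Longrightarrow>
      distr M borel (\<lambda>\<omega>. A \<omega> ** Q) = distr M borel A"
  shows "orthogonally_invariant M (\<lambda>\<omega>. A \<omega> $ i)"
  unfolding orthogonally_invariant_def
proof (intro allI impI)
  fix f :: "real^'n \<Rightarrow> real^'n"
  assume f: "orthogonal_transformation f"
  define Q where "Q = transpose (matrix f)"
  have Q: "orthogonal_matrix Q"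
    using f by (simp add: Q_def orthogonal_transformation_matrix)
  have row: "(A \<omega> ** Q) $ j = f (A \<omega> $ j)" for \<omega> j
    using f by (simp add: Q_def matrix_mult_transpose_matrix_nth orthogonal_transformation_linear)
  have AQ: "(\<lambda>\<omega>. A \<omega> ** Q) \<in> borel_measurable M"
    by (rule borel_measurable_vecI) (simp add: row measurable_compose[OF measurable_compose[OF A borel_measurable_vec_nth]
          borel_measurable_orthogonal_transformation[OF f]])
  have "distr M borel (\<lambda>\<omega>. f (A \<omega> $ i)) = distr (distr M borel (\<lambda>\<omega>. A \<omega> ** Q)) borel (\<lambda>B. B $ i)"
    using distr_distr[OF borel_measurable_vec_nth AQ] by (simp add: comp_def row)
  also have "\<dots> = distr (distr M borel A) borel (\<lambda>B. B $ i)"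
    by (simp add: inv[OF Q])
  also have "\<dots> = distr M borel (\<lambda>\<omega>. A \<omega> $ i)"
    using distr_distr[OF borel_measurable_vec_nth A] by (simp add: comp_def)
  finally show "distr M borel (\<lambda>\<omega>. f (A \<omega> $ i)) = distr M borel (\<lambda>\<omega>. A \<omega> $ i)" .
qed

lemma integral_norm_relu_vec_square_orthogonally_invariant_rows:
  fixes A :: "'a \<Rightarrow> real^'n^'m"
  assumes M: "prob_space M" and rows: "\<And>i. (\<lambda>\<omega>. A \<omega> $ i) \<in> borel_measurable M"
    and unit: "\<And>i. AE \<omega> in M. norm (A \<omega> $ i) = 1"
    and inv: "\<And>i. orthogonally_invariant M (\<lambda>\<omega>. A \<omega> $ i)" and "c \<ge> 0"
  shows "(\<integral>\<omega>. (norm (relu_vec (c *\<^sub>R (A \<omega> *v u))))\<^sup>2 \<partial>M) =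
    c\<^sup>2 * CARD('m) * (norm u)\<^sup>2 / (2 * CARD('n))"
proof -
  interpret prob_space M by (fact M)
  have integrable: "integrable M (\<lambda>\<omega>. (max 0 (A \<omega> $ i \<bullet> u))\<^sup>2)" for i
    by (rule integrable_inner_square_bounded; use rows unit[of i] finite_measure_axioms in \<open>force simp: max_def\<close>)
  have "(norm (relu_vec (c *\<^sub>R (A \<omega> *v u))))\<^sup>2 = c\<^sup>2 * (\<Sum>i\<in>UNIV. (max 0 (A \<omega> $ i \<bullet> u))\<^sup>2)" for \<omega>
    using \<open>c \<ge> 0\<close> by (simp add: relu_vec_scaleR norm_relu_vec_square matrix_vector_mul_component power_mult_distrib)
  then have "(\<integral>\<omega>. (norm (relu_vec (c *\<^sub>R (A \<omega> *v u))))\<^sup>2 \<partial>M) =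
      c\<^sup>2 * (\<Sum>i\<in>UNIV. \<integral>\<omega>. (max 0 (A \<omega> $ i \<bullet> u))\<^sup>2 \<partial>M)"
    using integrable by (simp add: Bochner_Integration.integral_sum)
  also have "\<dots> = c\<^sup>2 * (\<Sum>i\<in>(UNIV::'m set). (norm u)\<^sup>2 / (2 * CARD('n)))"
    by (simp add: integral_relu_inner_square_orthogonally_invariant[OF M rows unit inv])
  finally show ?thesis
    by simp
qed

theorem theorem1:
  fixes M :: "'s measure" and R :: "'s \<Rightarrow> real^'n^'m" and u :: "real^'n"
  assumes "prob_space M"
    and "CARD('n) > 1"
    and "R \<in> borel_measurable M"
    and "(\<exists>P :: (real^'n) measure. isotropic P \<and>
            prob_space.indep_vars M (\<lambda>_. borel) (\<lambda>i \<omega>. R \<omega> $ i) UNIV \<and>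
            (\<forall>i. distr M borel (\<lambda>\<omega>. R \<omega> $ i) = P))
       \<or> ((AE \<omega> in M. orthonormal_rows (rownormalize (R \<omega>))) \<and>
          (\<forall>Q :: real^'n^'n. orthogonal_matrix Q \<longrightarrow>
              distr M borel (\<lambda>\<omega>. rownormalize (R \<omega>) ** Q) =
              distr M borel (\<lambda>\<omega>. rownormalize (R \<omega>))))"
  shows "prob_space.expectation M
           (\<lambda>\<omega>. (norm (relu_vec (sqrt (2 * real CARD('n) / real CARD('m)) *\<^sub>R
                                    (rownormalize (R \<omega>) *v u))))\<^sup>2)
         = K_const CARD('n) * (norm u)\<^sup>2"
proof -
  define A where "A \<omega> = rownormalize (R \<omega>)" for \<omega>
  have R_row: "(\<lambda>\<omega>. R \<omega> $ i) \<in> borel_measurable M" for i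
    using measurable_compose[OF assms(3) borel_measurable_vec_nth] .
  have A_row: "A \<omega> $ i = sgn (R \<omega> $ i)" for \<omega> i
    by (simp add: A_def rownormalize_nth)
  have rows: "(AE \<omega> in M. norm (A \<omega> $ i) = 1) \<and> orthogonally_invariant M (\<lambda>\<omega>. A \<omega> $ i)" for i
    using assms(4)
  proof (elim disjE exE conjE)
    fix P :: "(real^'n) measure"
    assume "isotropic P" "\<forall>i. distr M borel (\<lambda>\<omega>. R \<omega> $ i) = P"
    then have iso: "isotropic (distr M borel (\<lambda>\<omega>. R \<omega> $ i))" by simp
    show ?thesis
      using AE_nonzero_if_isotropic[OF R_row iso]
        orthogonally_invariant_sgn[OF R_row orthogonally_invariant_if_isotropic[OF R_row iso]]
      by (auto simp: A_row norm_sgn elim!: eventually_mono)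
  next
    assume "AE \<omega> in M. orthonormal_rows (rownormalize (R \<omega>))"
      and "\<forall>Q :: real^'n^'n. orthogonal_matrix Q \<longrightarrow>
        distr M borel (\<lambda>\<omega>. rownormalize (R \<omega>) ** Q) = distr M borel (\<lambda>\<omega>. rownormalize (R \<omega>))"
    then show ?thesis
      using orthogonally_invariant_row[OF measurable_compose[OF assms(3) borel_measurable_rownormalize]]
      by (auto simp: A_def orthonormal_rows_def norm_eq_1 elim!: eventually_mono)
  qed
  have "prob_space.expectation M (\<lambda>\<omega>. (norm (relu_vec (sqrt (2 * real CARD('n) / real CARD('m)) *\<^sub>R
      (A \<omega> *v u))))\<^sup>2) = (2 * real CARD('n) / real CARD('m)) * CARD('m) * (norm u)\<^sup>2 / (2 * CARD('n))"
    using rows by (subst integral_norm_relu_vec_square_orthogonally_invariant_rows[OF assms(1)])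
      (auto simp: A_row measurable_compose[OF R_row borel_measurable_sgn])
  also have "\<dots> = K_const CARD('n) * (norm u)\<^sup>2"
    using assms(2) by (simp add: K_const_eq_1)
  finally show ?thesis
    by (simp only: A_def)
qed

end
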